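(* Let $k\ge2$ and $n\ge3$. If $k$ is even, then $\mathcal{F}_{n,k}(x)$ has no nonzero real roots. If $k$ is odd, then $\mathcal{F}_{n,k}(x)$ has no positive real roots.
   Context: For $k\ge2$ and $n\ge1$, the polynomials $\mathcal{F}_{n,k}(x)$ are defined by $\mathcal{F}_{1,k}=1$, $\mathcal{F}_{n,k}=0$ for $n=0,-1,\dots,-(k-2)$, and $\mathcal{F}_{n,k}(x)=x^{k-1}\mathcal{F}_{n-1,k}(x)+x^{k-2}\mathcal{F}_{n-2,k}(x)+\dots+\mathcal{F}_{n-k,k}(x)$ for $n\ge2$. *)

theory Defs
  imports "HOL-Computational_Algebra.Polynomial"
begin

text \<open>kfib k n is the polynomial F_{n,k}(x) for n \<ge> 1; index 0 stands for all the
  indices 0, -1, ..., -(k-2), where the polynomial is 0. For j \<ge> n the nat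
  subtraction n - j truncates to 0, which matches F_{n-j,k} = 0 for n - j \<le> 0
  (in the recurrence n - j \<ge> 2 - k always).\<close>
fun kfib :: "nat \<Rightarrow> nat \<Rightarrow> real poly" where
  "kfib k 0 = 0"
| "kfib k (Suc 0) = 1"
| "kfib k (Suc (Suc m)) =
     (\<Sum>j\<in>{1..k}. [:0, 1:] ^ (k - j) * kfib k (Suc (Suc m) - j))"


end

theory Submission
  imports Defs
begin

text \<open>For \<open>x > 0\<close> every summand of the recurrence is nonnegative and the summand
  \<open>j = 1\<close> is positive, so by strong induction \<open>F\<^sub>n(x) > 0\<close> for \<open>n \<ge> 1\<close>. For even \<open>k\<close>
  the monomial \<open>x ^ (k - j)\<close> has the parity of \<open>j\<close>, so the recurrence propagates
  \<open>F\<^sub>n(-x) = (-1) ^ (n + 1) F\<^sub>n(x)\<close>, which reduces negative roots to positive ones.\<close>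

lemma kfib_rec:
  assumes "n \<ge> 2"
  shows "kfib k n = (\<Sum>j\<in>{1..k}. [:0, 1:] ^ (k - j) * kfib k (n - j))"
proof -
  obtain m where "n = Suc (Suc m)"
    using assms by (metis add_2_eq_Suc le_Suc_ex)
  then show ?thesis by simp
qed

lemma poly_kfib_pos:
  assumes "k \<ge> 1" "x > 0" "n \<ge> 1"
  shows "poly (kfib k n) x > 0"
  using assms(3)
proof (induction n rule: less_induct)
  case (less n)
  show ?case
  proof (cases "n = 1")
    case True
    then show ?thesis by simp
  next
    case False
    with less.prems have n: "n \<ge> 2" by simp
    have nonneg: "0 \<le> x ^ (k - j) * poly (kfib k (n - j)) x" if "j \<in> {1..k}" for j
      using less.IH[of "n - j"] that assms(2)
      by (cases "n - j = 0") (auto intro: less_imp_le)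
    have "0 < x ^ (k - 1) * poly (kfib k (n - 1)) x"
      using less.IH[of "n - 1"] n assms(2) by simp
    then have "0 < (\<Sum>j\<in>{1..k}. x ^ (k - j) * poly (kfib k (n - j)) x)"
      by (intro sum_pos2[where i = 1]) (use nonneg assms(1) in auto)
    then show ?thesis
      using n by (simp add: kfib_rec poly_sum)
  qed
qed

lemma poly_kfib_minus:
  assumes "even k"
  shows "poly (kfib k n) (- x) = (-1) ^ (n + 1) * poly (kfib k n) x"
proof (induction n rule: less_induct)
  case (less n)
  show ?case
  proof (cases "n \<ge> 2")
    case False
    then have "n = 0 \<or> n = 1" by auto
    then show ?thesis by auto
  next
    case n: True
    have summand: "(- x) ^ (k - j) * poly (kfib k (n - j)) (- x)
        = (-1) ^ (n + 1) * (x ^ (k - j) * poly (kfib k (n - j)) x)" if j: "j \<in> {1..k}" for j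
    proof (cases "j < n")
      case False
      then show ?thesis by simp
    next
      case True
      have parity: "even (k - j + (n - j + 1)) \<longleftrightarrow> even (n + 1)"
        using assms j True unfolding atLeastAtMost_iff by presburger
      have sign: "(-1 :: real) ^ (k - j) * (-1) ^ (n - j + 1) = (-1) ^ (n + 1)"
        unfolding power_add[symmetric] by (simp only: minus_one_power_iff parity)
      have IH: "poly (kfib k (n - j)) (- x) = (-1) ^ (n - j + 1) * poly (kfib k (n - j)) x"
        using less.IH j True by simp
      have "(- x) ^ (k - j) * poly (kfib k (n - j)) (- x)
          = ((-1) ^ (k - j) * (-1) ^ (n - j + 1)) * (x ^ (k - j) * poly (kfib k (n - j)) x)"
        unfolding IH power_minus[of x] by (simp only: mult_ac)
      then show ?thesis
        by (simp only: sign)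
    qed
    then show ?thesis
      using n by (simp add: kfib_rec poly_sum sum_distrib_left)
  qed
qed

theorem mainTheorem15:
  fixes k n :: nat
  assumes "k \<ge> 2" and "n \<ge> 3"
  shows "(even k \<longrightarrow> (\<forall>x::real. x \<noteq> 0 \<longrightarrow> poly (kfib k n) x \<noteq> 0))
       \<and> (odd k \<longrightarrow> (\<forall>x::real. x > 0 \<longrightarrow> poly (kfib k n) x \<noteq> 0))"
proof -
  have pos: "poly (kfib k n) x \<noteq> 0" if "x > 0" for x :: real
    using poly_kfib_pos[of k x n] assms that by simp
  have "poly (kfib k n) x \<noteq> 0" if "even k" "x \<noteq> 0" for x :: real
  proof (cases "x > 0")
    case True
    then show ?thesis by (rule pos)
  next
    case False
    with that have "poly (kfib k n) (- x) \<noteq> 0"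
      by (intro pos) simp
    then show ?thesis
      using poly_kfib_minus[OF \<open>even k\<close>, of n x] by simp
  qed
  with pos show ?thesis by blast
qed

end
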